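(* Let $F:\mathcal{X}\to\mathcal{X}$ be such that the Koopman operator $\mathcal{K}$ on $\mathcal{H}$ is densely defined, and let $\mathfrak{K}_1,\mathfrak{K}_2,\dots$ be a countable family of kernel functions (i.e. $\mathfrak{K}_j=\mathfrak{K}_{x_j}$ for some $x_j\in\mathcal{X}$) whose linear span is a core of $\mathcal{K}^*$. Let $V_N=\mathrm{span}\{\mathfrak{K}_1,\dots,\mathfrak{K}_N\}$, let $\mathcal{P}_N:\mathcal{H}\to V_N$ be the orthogonal projection and $\mathcal{P}_N^*:V_N\to\mathcal{H}$ the inclusion, so that $$\sigma_{\inf}((\mathcal{K}^*-zI)\mathcal{P}_N^* )=\inf_{0\neq g\in V_N}\frac{\|(\mathcal{K}^*-zI)g\|}{\|g\|}.$$ Then for each $z\in\mathbb{C}$ the quantity $\sigma_{\inf}((\mathcal{K}^*-zI)\mathcal{P}_N^* )$ is non-increasing in $N$, and as $N\to\infty$ the functions $z\mapsto\sigma_{\inf}((\mathcal{K}^*-zI)\mathcal{P}_N^* )$ converge to $z\mapsto\sigma_{\inf}(\mathcal{K}^*-zI)$ uniformly on compact subsets of $\mathbb{C}$.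
   Context: $\mathcal{H}$ is a reproducing kernel Hilbert space (RKHS) of complex-valued functions on a set $\mathcal{X}$ with reproducing kernel $\mathfrak{K}:\mathcal{X}\times\mathcal{X}\to\mathbb{C}$, inner product $\langle\cdot,\cdot\rangle$ (linear in the first argument) and norm $\|\cdot\|$; $\mathfrak{K}_x\in\mathcal{H}$ denotes the kernel function at $x$, so $g(x)=\langle g,\mathfrak{K}_x\rangle$ for all $g\in\mathcal{H}$ and $\mathfrak{K}(x,y)=\langle\mathfrak{K}_x,\mathfrak{K}_y\rangle$. For $F:\mathcal{X}\to\mathcal{X}$ the Koopman operator $\mathcal{K}=\mathcal{K}_F$ on $\mathcal{H}$ is $\mathcal{K}g=g\circ F$ with domain $\{g\in\mathcal{H}:g\circ F\in\mathcal{H}\}$; it is closed. When it is densely defined, its adjoint $\mathcal{K}^*$ (Perron–Frobenius operator) is closed and densely defined, and $\mathfrak{K}_x\in\mathcal{D}(\mathcal{K}^* )$ with $\mathcal{K}^*\mathfrak{K}_x=\mathfrak{K}_{F(x)}$. For an operator $T$ with domain $\mathcal{D}(T)$, the injection modulus is $\sigma_{\inf}(T)=\inf\{\|Tg\|/\|g\|:0\neq g\in\mathcal{D}(T)\}$. A core of a closed operator $T$ is a subspace of $\mathcal{D}(T)$ on which the restriction of $T$ has closure $T$. *)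

theory Defs
  imports "HOL-Analysis.Analysis"
begin

definition hnorm :: "(('x \<Rightarrow> complex) \<Rightarrow> ('x \<Rightarrow> complex) \<Rightarrow> complex) \<Rightarrow> ('x \<Rightarrow> complex) \<Rightarrow> real" where
  "hnorm ip g = sqrt (Re (ip g g))"

definition is_rkhs :: "('x \<Rightarrow> complex) set \<Rightarrow> (('x \<Rightarrow> complex) \<Rightarrow> ('x \<Rightarrow> complex) \<Rightarrow> complex)
    \<Rightarrow> ('x \<Rightarrow> 'x \<Rightarrow> complex) \<Rightarrow> bool" where
  "is_rkhs H ip K \<longleftrightarrow>
     \<comment> \<open>complex vector space of functions\<close>
     (\<lambda>_. 0) \<in> H \<and>
     (\<forall>f\<in>H. \<forall>g\<in>H. (\<lambda>y. f y + g y) \<in> H) \<and>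
     (\<forall>c. \<forall>f\<in>H. (\<lambda>y. c * f y) \<in> H) \<and>
     \<comment> \<open>inner product: linear in the first argument, conjugate symmetric, positive definite\<close>
     (\<forall>f\<in>H. \<forall>g\<in>H. \<forall>h\<in>H. \<forall>c. ip (\<lambda>y. c * f y + g y) h = c * ip f h + ip g h) \<and>
     (\<forall>f\<in>H. \<forall>g\<in>H. ip g f = cnj (ip f g)) \<and>
     (\<forall>f\<in>H. 0 \<le> Re (ip f f)) \<and>
     (\<forall>f\<in>H. ip f f = 0 \<longrightarrow> f = (\<lambda>_. 0)) \<and>
     \<comment> \<open>completeness\<close>
     (\<forall>s. (\<forall>n. s n \<in> H) \<and>
          (\<forall>e>0. \<exists>M. \<forall>m\<ge>M. \<forall>n\<ge>M. hnorm ip (\<lambda>y. s m y - s n y) < e)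
        \<longrightarrow> (\<exists>l\<in>H. (\<lambda>n. hnorm ip (\<lambda>y. s n y - l y)) \<longlonglongrightarrow> 0)) \<and>
     \<comment> \<open>reproducing kernel: the kernel function at x is K x, i.e. K(x,y) = K_x(y) = <K_x, K_y>\<close>
     (\<forall>x. K x \<in> H) \<and>
     (\<forall>g\<in>H. \<forall>x. g x = ip g (K x)) \<and>
     (\<forall>x y. K x y = ip (K x) (K y))"

definition dense_in_H :: "('x \<Rightarrow> complex) set \<Rightarrow> (('x \<Rightarrow> complex) \<Rightarrow> ('x \<Rightarrow> complex) \<Rightarrow> complex)
    \<Rightarrow> ('x \<Rightarrow> complex) set \<Rightarrow> bool" where
  "dense_in_H H ip D \<longleftrightarrow> D \<subseteq> H \<and> (\<forall>g\<in>H. \<forall>e>0. \<exists>d\<in>D. hnorm ip (\<lambda>y. g y - d y) < e)"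

definition koopman_dom :: "('x \<Rightarrow> complex) set \<Rightarrow> ('x \<Rightarrow> 'x) \<Rightarrow> ('x \<Rightarrow> complex) set" where
  "koopman_dom H F = {g \<in> H. g \<circ> F \<in> H}"

text \<open>Adjoint of the Koopman operator (Perron--Frobenius operator): domain and action.\<close>
definition pf_dom :: "('x \<Rightarrow> complex) set \<Rightarrow> (('x \<Rightarrow> complex) \<Rightarrow> ('x \<Rightarrow> complex) \<Rightarrow> complex)
    \<Rightarrow> ('x \<Rightarrow> 'x) \<Rightarrow> ('x \<Rightarrow> complex) set" where
  "pf_dom H ip F = {h \<in> H. \<exists>w\<in>H. \<forall>g\<in>koopman_dom H F. ip (g \<circ> F) h = ip g w}"

definition pf :: "('x \<Rightarrow> complex) set \<Rightarrow> (('x \<Rightarrow> complex) \<Rightarrow> ('x \<Rightarrow> complex) \<Rightarrow> complex)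
    \<Rightarrow> ('x \<Rightarrow> 'x) \<Rightarrow> ('x \<Rightarrow> complex) \<Rightarrow> ('x \<Rightarrow> complex)" where
  "pf H ip F h = (THE w. w \<in> H \<and> (\<forall>g\<in>koopman_dom H F. ip (g \<circ> F) h = ip g w))"

definition cspan :: "('x \<Rightarrow> complex) set \<Rightarrow> ('x \<Rightarrow> complex) set" where
  "cspan S = {g. \<exists>A c. finite A \<and> A \<subseteq> S \<and> g = (\<lambda>y. \<Sum>s\<in>A. c s * s y)}"

definition is_core :: "('x \<Rightarrow> complex) set \<Rightarrow> (('x \<Rightarrow> complex) \<Rightarrow> ('x \<Rightarrow> complex) \<Rightarrow> complex)
    \<Rightarrow> (('x \<Rightarrow> complex) \<Rightarrow> ('x \<Rightarrow> complex)) \<Rightarrow> ('x \<Rightarrow> complex) set \<Rightarrow> ('x \<Rightarrow> complex) set \<Rightarrow> bool" where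
  "is_core H ip T D S \<longleftrightarrow> S \<subseteq> D \<and>
     {(h, w). h \<in> H \<and> w \<in> H \<and>
        (\<forall>e>0. \<exists>g\<in>S. hnorm ip (\<lambda>y. h y - g y) < e \<and> hnorm ip (\<lambda>y. w y - T g y) < e)}
     = {(h, T h) | h. h \<in> D}"

text \<open>Injection modulus (extended-real valued; the infimum over the empty set is \<infinity>).\<close>
definition sigma_inf :: "(('x \<Rightarrow> complex) \<Rightarrow> ('x \<Rightarrow> complex) \<Rightarrow> complex)
    \<Rightarrow> (('x \<Rightarrow> complex) \<Rightarrow> ('x \<Rightarrow> complex)) \<Rightarrow> ('x \<Rightarrow> complex) set \<Rightarrow> ereal" where
  "sigma_inf ip T D = Inf {ereal (hnorm ip (T g) / hnorm ip g) | g. g \<in> D \<and> g \<noteq> (\<lambda>_. 0)}"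

end

theory Submission
  imports Defs
begin

text \<open>Since the spaces \<open>V\<^sub>N\<close> increase and lie in the domain of \<open>\<K>\<^sup>*\<close>, the injection
  moduli \<open>\<sigma>\<^sub>N(z)\<close> decrease and stay above \<open>\<sigma>(z) = \<sigma>\<^sub>i\<^sub>n\<^sub>f(\<K>\<^sup>* - z)\<close>. Approximating a
  vector of the domain in the graph norm by elements of the core changes its quotient
  \<open>\<parallel>(\<K>\<^sup>* - z)g\<parallel> / \<parallel>g\<parallel>\<close> arbitrarily little, so the infimum over the core is \<open>\<sigma>(z)\<close>;
  as the core is the union of the \<open>V\<^sub>N\<close>, this gives pointwise convergence \<open>\<sigma>\<^sub>N(z) \<down> \<sigma>(z)\<close>.
  All these functions are 1-Lipschitz in \<open>z\<close>, so pointwise convergence is uniform on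
  compact sets by a finite \<open>\<epsilon>/3\<close>-net.\<close>

lemma quadratic_nonneg_imp_discriminant_le:
  fixes a b c :: real
  assumes nonneg: "\<forall>t. 0 \<le> c + 2*t*b + t^2*a" and "0 \<le> a"
  shows "b^2 \<le> a*c"
proof (cases "a = 0")
  case True
  have "b = 0"
  proof (rule ccontr)
    assume "b \<noteq> 0"
    moreover have "0 \<le> c + 2*(-(c+1)/(2*b))*b + (-(c+1)/(2*b))^2*a" using nonneg by blast
    ultimately show False using True by (simp add: field_simps)
  qed
  then show ?thesis using True by simp
next
  case False
  with \<open>0 \<le> a\<close> have "a > 0" by simp
  have "0 \<le> c + 2*(-b/a)*b + (-b/a)^2*a" using nonneg by blast
  then have "0 \<le> c - b^2/a" using \<open>a > 0\<close> by (simp add: field_simps power2_eq_square)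
  then show ?thesis using \<open>a > 0\<close> by (simp add: field_simps)
qed

lemma ratio_perturbation_small:
  fixes A G k \<epsilon> :: real
  assumes "0 < G" and "0 < \<epsilon>"
  obtains \<delta> where "0 < \<delta>" "\<delta> < G" "(A + k * \<delta>) / (G - \<delta>) < A / G + \<epsilon>"
proof -
  have "((\<lambda>\<delta>. (A + k * \<delta>) / (G - \<delta>)) \<longlongrightarrow> (A + k * 0) / (G - 0)) (at_right 0)"
    using assms(1) by (intro tendsto_intros) auto
  then have "\<forall>\<^sub>F \<delta> in at_right 0. (A + k * \<delta>) / (G - \<delta>) < A / G + \<epsilon>"
    using assms(2) by (intro order_tendstoD(2)) auto
  then obtain b where "b > 0" and b: "\<And>\<delta>. 0 < \<delta> \<Longrightarrow> \<delta> < b \<Longrightarrow> (A + k * \<delta>) / (G - \<delta>) < A / G + \<epsilon>"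
    unfolding eventually_at_right_field by auto
  show thesis
    by (rule that[of "min (b/2) (G/2)"]) (use \<open>b > 0\<close> assms(1) b in auto)
qed

lemma finite_subset_UN_incseq:
  assumes "incseq A" "finite B" "B \<subseteq> (\<Union>N. A N)"
  shows "\<exists>N. B \<subseteq> A N"
  using assms(2,3)
proof (induction B rule: finite_induct)
  case (insert x B)
  then obtain m n where "x \<in> A m" "B \<subseteq> A n" by auto
  then have "insert x B \<subseteq> A (max m n)"
    using monoD[OF assms(1), of m "max m n"] monoD[OF assms(1), of n "max m n"] by auto
  then show ?case ..
qed simp

lemma eventually_uniform_le_of_equi_lipschitz:
  fixes f :: "nat \<Rightarrow> 'a::metric_space \<Rightarrow> ereal" and g :: "'a \<Rightarrow> ereal"
  assumes "compact C" and "0 < e"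
    and f_lip: "\<And>N z w. f N z \<le> f N w + ereal (dist z w)"
    and g_lip: "\<And>z w. g z \<le> g w + ereal (dist z w)"
    and g_not_minf: "\<And>z. g z \<noteq> -\<infinity>"
    and conv: "\<And>z b. g z < b \<Longrightarrow> \<forall>\<^sub>F N in sequentially. f N z < b"
  shows "\<forall>\<^sub>F N in sequentially. \<forall>z\<in>C. f N z \<le> g z + ereal e"
proof -
  have local: "\<forall>\<^sub>F N in sequentially. \<forall>z\<in>ball z0 (e/3). f N z \<le> g z + ereal e" for z0
  proof (cases "g z0")
    case (real r)
    have "\<forall>\<^sub>F N in sequentially. f N z0 < ereal (r + e/3)"
      using conv[of z0] real \<open>0 < e\<close> by simp
    then show ?thesis
    proof (rule eventually_mono, intro ballI)
      fix N z assume fN: "f N z0 < ereal (r + e/3)" and z: "z \<in> ball z0 (e/3)"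
      then have d: "dist z z0 < e/3" by (simp add: dist_commute)
      have "f N z \<le> f N z0 + ereal (dist z z0)" by (rule f_lip)
      also have "\<dots> \<le> ereal (r + e/3) + ereal (dist z z0)"
        using fN by (intro add_right_mono) simp
      finally have "f N z \<le> ereal (r + e/3 + dist z z0)" by simp
      moreover have "ereal r \<le> g z + ereal (dist z z0)"
        using g_lip[of z0 z] real by (simp add: dist_commute)
      then have "ereal (r - dist z z0) \<le> g z" by (cases "g z") auto
      ultimately show "f N z \<le> g z + ereal e"
        using d by (cases "g z") (auto elim!: order_trans)
    qed
  next
    case PInf
    have "g z = \<infinity>" for z
      using g_lip[of z0 z] PInf by (cases "g z") auto
    then show ?thesis by simp
  qed (use g_not_minf in blast)
  have "C \<subseteq> (\<Union>c\<in>C. ball c (e/3))" using \<open>0 < e\<close> by auto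
  then obtain C' where "C' \<subseteq> C" "finite C'" and C': "C \<subseteq> (\<Union>c\<in>C'. ball c (e/3))"
    using compactE_image[OF \<open>compact C\<close>] by (metis open_ball)
  have "\<forall>\<^sub>F N in sequentially. \<forall>c\<in>C'. \<forall>z\<in>ball c (e/3). f N z \<le> g z + ereal e"
    using local by (intro eventually_ball_finite[OF \<open>finite C'\<close>] ballI)
  then show ?thesis
    by (rule eventually_mono) (use C' in blast)
qed

lemma cspan_mono: "A \<subseteq> B \<Longrightarrow> cspan A \<subseteq> cspan B"
  unfolding cspan_def by blast

lemma cspan_UN_incseq:
  assumes "incseq A"
  shows "cspan (\<Union>N. A N) = (\<Union>N. cspan (A N))"
proof
  show "cspan (\<Union>N. A N) \<subseteq> (\<Union>N. cspan (A N))"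
  proof
    fix g assume "g \<in> cspan (\<Union>N. A N)"
    then obtain B c where "finite B" "B \<subseteq> (\<Union>N. A N)" "g = (\<lambda>y. \<Sum>s\<in>B. c s * s y)"
      unfolding cspan_def by blast
    moreover obtain N where "B \<subseteq> A N"
      using finite_subset_UN_incseq[OF assms \<open>finite B\<close> \<open>B \<subseteq> (\<Union>N. A N)\<close>] ..
    ultimately show "g \<in> (\<Union>N. cspan (A N))" unfolding cspan_def by blast
  qed
  show "(\<Union>N. cspan (A N)) \<subseteq> cspan (\<Union>N. A N)"
    by (intro UN_least cspan_mono) blast
qed

lemma sigma_inf_le:
  "g \<in> X \<Longrightarrow> g \<noteq> (\<lambda>_. 0) \<Longrightarrow> sigma_inf ip T X \<le> ereal (hnorm ip (T g) / hnorm ip g)"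
  unfolding sigma_inf_def by (rule Inf_lower) blast

lemma sigma_inf_greatest:
  "(\<And>g. g \<in> X \<Longrightarrow> g \<noteq> (\<lambda>_. 0) \<Longrightarrow> b \<le> ereal (hnorm ip (T g) / hnorm ip g))
    \<Longrightarrow> b \<le> sigma_inf ip T X"
  unfolding sigma_inf_def by (rule Inf_greatest) blast

lemma sigma_inf_antimono: "X \<subseteq> Y \<Longrightarrow> sigma_inf ip T Y \<le> sigma_inf ip T X"
  unfolding sigma_inf_def by (rule Inf_superset_mono) blast

lemma sigma_inf_less_iff:
  "sigma_inf ip T X < b \<longleftrightarrow> (\<exists>g\<in>X. g \<noteq> (\<lambda>_. 0) \<and> ereal (hnorm ip (T g) / hnorm ip g) < b)"
  unfolding sigma_inf_def by (auto simp: Inf_less_iff)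

lemma sigma_inf_UN_incseq_eventually_less:
  assumes "incseq X" and "sigma_inf ip T (\<Union>N. X N) < b"
  shows "\<forall>\<^sub>F N in sequentially. sigma_inf ip T (X N) < b"
proof -
  obtain g N where "g \<in> X N" "g \<noteq> (\<lambda>_. 0)" "ereal (hnorm ip (T g) / hnorm ip g) < b"
    using assms(2) unfolding sigma_inf_less_iff by blast
  then have "sigma_inf ip T (X M) < b" if "N \<le> M" for M
    using monoD[OF assms(1) that] by (auto simp: sigma_inf_less_iff)
  then show ?thesis by (rule eventually_sequentiallyI)
qed

lemma is_core_graphD:
  assumes "is_core H ip T D S" and "g \<in> D"
  shows "g \<in> H" "T g \<in> H"
    and "e > 0 \<Longrightarrow> \<exists>s\<in>S. hnorm ip (\<lambda>y. g y - s y) < e \<and> hnorm ip (\<lambda>y. T g y - T s y) < e"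
proof -
  have "(g, T g) \<in> {(h, T h) | h. h \<in> D}" using assms(2) by blast
  then have "(g, T g) \<in> {(h, w). h \<in> H \<and> w \<in> H \<and>
      (\<forall>e>0. \<exists>s\<in>S. hnorm ip (\<lambda>y. h y - s y) < e \<and> hnorm ip (\<lambda>y. w y - T s y) < e)}"
    using assms(1) unfolding is_core_def by argo
  then show "g \<in> H" "T g \<in> H"
    and "e > 0 \<Longrightarrow> \<exists>s\<in>S. hnorm ip (\<lambda>y. g y - s y) < e \<and> hnorm ip (\<lambda>y. T g y - T s y) < e"
    by auto
qed

locale rkhs =
  fixes H :: "('x \<Rightarrow> complex) set"
    and ip :: "('x \<Rightarrow> complex) \<Rightarrow> ('x \<Rightarrow> complex) \<Rightarrow> complex"
    and K :: "'x \<Rightarrow> 'x \<Rightarrow> complex"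
  assumes is_rkhs: "is_rkhs H ip K"
begin

lemma zero_mem: "(\<lambda>_. 0) \<in> H"
  using is_rkhs unfolding is_rkhs_def by blast

lemma add_mem: "f \<in> H \<Longrightarrow> g \<in> H \<Longrightarrow> (\<lambda>y. f y + g y) \<in> H"
  using is_rkhs unfolding is_rkhs_def by blast

lemma scale_mem: "f \<in> H \<Longrightarrow> (\<lambda>y. c * f y) \<in> H"
  using is_rkhs unfolding is_rkhs_def by blast

lemma diff_mem: "f \<in> H \<Longrightarrow> g \<in> H \<Longrightarrow> (\<lambda>y. f y - g y) \<in> H"
  using add_mem[of f "\<lambda>y. (-1) * g y"] scale_mem[of g "-1"] by simp

lemma ip_linear_left:
  "f \<in> H \<Longrightarrow> g \<in> H \<Longrightarrow> h \<in> H \<Longrightarrow> ip (\<lambda>y. c * f y + g y) h = c * ip f h + ip g h"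
  using is_rkhs unfolding is_rkhs_def by blast

lemma ip_cnj_commute: "f \<in> H \<Longrightarrow> g \<in> H \<Longrightarrow> ip g f = cnj (ip f g)"
  using is_rkhs unfolding is_rkhs_def by blast

lemma ip_self_nonneg: "f \<in> H \<Longrightarrow> 0 \<le> Re (ip f f)"
  using is_rkhs unfolding is_rkhs_def by blast

lemma ip_self_eq_zeroD: "f \<in> H \<Longrightarrow> ip f f = 0 \<Longrightarrow> f = (\<lambda>_. 0)"
  using is_rkhs unfolding is_rkhs_def by blast

lemma ip_zero_left: "h \<in> H \<Longrightarrow> ip (\<lambda>_. 0) h = 0"
  using ip_linear_left[of "\<lambda>_. 0" "\<lambda>_. 0" h 1] zero_mem by simp

lemma ip_scale_left: "f \<in> H \<Longrightarrow> h \<in> H \<Longrightarrow> ip (\<lambda>y. c * f y) h = c * ip f h"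
  using ip_linear_left[of f "\<lambda>_. 0" h c] zero_mem ip_zero_left by simp

lemma ip_add_left: "f \<in> H \<Longrightarrow> g \<in> H \<Longrightarrow> h \<in> H \<Longrightarrow> ip (\<lambda>y. f y + g y) h = ip f h + ip g h"
  using ip_linear_left[of f g h 1] by simp

lemma ip_add_right:
  assumes "f \<in> H" "g \<in> H" "h \<in> H"
  shows "ip h (\<lambda>y. f y + g y) = ip h f + ip h g"
proof -
  have "ip h (\<lambda>y. f y + g y) = cnj (ip (\<lambda>y. f y + g y) h)"
    using assms ip_cnj_commute[OF add_mem[OF assms(1,2)] assms(3)] by simp
  also have "\<dots> = ip h f + ip h g"
    using assms by (simp add: ip_add_left ip_cnj_commute[of h])
  finally show ?thesis .
qed

lemma ip_scale_right:
  assumes "f \<in> H" "h \<in> H"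
  shows "ip h (\<lambda>y. c * f y) = cnj c * ip h f"
proof -
  have "ip h (\<lambda>y. c * f y) = cnj (ip (\<lambda>y. c * f y) h)"
    using ip_cnj_commute[OF scale_mem[OF assms(1)] assms(2)] by simp
  also have "\<dots> = cnj c * ip h f"
    using assms by (simp add: ip_scale_left ip_cnj_commute[of h])
  finally show ?thesis .
qed

lemma ip_self_real: "f \<in> H \<Longrightarrow> ip f f = complex_of_real (Re (ip f f))"
  using ip_cnj_commute[of f f] by (simp add: complex_eq_iff)

lemma hnorm_nonneg: "f \<in> H \<Longrightarrow> 0 \<le> hnorm ip f"
  using ip_self_nonneg by (simp add: hnorm_def)

lemma hnorm_zero: "hnorm ip (\<lambda>_. 0) = 0"
  using ip_zero_left zero_mem by (simp add: hnorm_def)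

lemma hnorm_pos:
  assumes "f \<in> H" "f \<noteq> (\<lambda>_. 0)"
  shows "0 < hnorm ip f"
proof -
  have "Re (ip f f) \<noteq> 0"
    using assms ip_self_real ip_self_eq_zeroD by force
  then show ?thesis
    using ip_self_nonneg[OF assms(1)] by (simp add: hnorm_def)
qed

lemma hnorm_scale: "f \<in> H \<Longrightarrow> hnorm ip (\<lambda>y. c * f y) = cmod c * hnorm ip f"
proof -
  assume "f \<in> H"
  then have "ip (\<lambda>y. c * f y) (\<lambda>y. c * f y) = complex_of_real ((cmod c)^2 * Re (ip f f))"
    using ip_self_real[of f] complex_norm_square[of c]
    by (simp add: ip_scale_left ip_scale_right scale_mem mult.assoc)
  then show ?thesis by (simp add: hnorm_def real_sqrt_mult)
qed

lemma ip_self_add_real_scale: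
  assumes f: "f \<in> H" and g: "g \<in> H"
  shows "Re (ip (\<lambda>y. f y + complex_of_real t * g y) (\<lambda>y. f y + complex_of_real t * g y))
       = Re (ip f f) + 2*t*Re (ip f g) + t^2 * Re (ip g g)"
proof -
  define u where "u = (\<lambda>y. complex_of_real t * g y)"
  have u: "u \<in> H" unfolding u_def using scale_mem[OF g] .
  have "ip (\<lambda>y. f y + u y) (\<lambda>y. f y + u y) = ip f f + ip f u + (ip u f + ip u u)"
    using f u by (simp add: ip_add_left ip_add_right add_mem)
  also have "\<dots> = ip f f + t * ip f g + (t * ip g f + t * (t * ip g g))"
    unfolding u_def using f g by (simp add: ip_scale_left ip_scale_right scale_mem)
  finally have "ip (\<lambda>y. f y + u y) (\<lambda>y. f y + u y)
      = ip f f + t * ip f g + (t * ip g f + t * (t * ip g g))" .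
  moreover have "Re (ip g f) = Re (ip f g)" by (simp add: ip_cnj_commute[OF f g])
  ultimately show ?thesis unfolding u_def by (simp add: power2_eq_square)
qed

lemma Re_ip_Cauchy_Schwarz:
  assumes f: "f \<in> H" and g: "g \<in> H"
  shows "(Re (ip f g))^2 \<le> Re (ip g g) * Re (ip f f)"
proof (rule quadratic_nonneg_imp_discriminant_le)
  show "\<forall>t. 0 \<le> Re (ip f f) + 2*t*Re (ip f g) + t^2 * Re (ip g g)"
  proof
    fix t
    have "(\<lambda>y. f y + complex_of_real t * g y) \<in> H" using f g by (simp add: add_mem scale_mem)
    from ip_self_nonneg[OF this] show "0 \<le> Re (ip f f) + 2*t*Re (ip f g) + t^2 * Re (ip g g)"
      unfolding ip_self_add_real_scale[OF f g] .
  qed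
  show "0 \<le> Re (ip g g)" using ip_self_nonneg[OF g] .
qed

lemma hnorm_triangle:
  assumes "f \<in> H" "g \<in> H"
  shows "hnorm ip (\<lambda>y. f y + g y) \<le> hnorm ip f + hnorm ip g"
proof -
  let ?a = "Re (ip f f)" and ?b = "Re (ip f g)" and ?c = "Re (ip g g)"
  have "?b \<le> sqrt ?c * sqrt ?a"
    using real_sqrt_le_mono[OF Re_ip_Cauchy_Schwarz[OF assms]] by (simp add: real_sqrt_mult)
  then have "Re (ip (\<lambda>y. f y + g y) (\<lambda>y. f y + g y)) \<le> (sqrt ?a + sqrt ?c)^2"
    using ip_self_add_real_scale[OF assms, of 1] ip_self_nonneg assms
    by (simp add: power2_sum mult.commute)
  then show ?thesis
    unfolding hnorm_def using ip_self_nonneg assms by (intro real_le_lsqrt) auto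
qed

lemma hnorm_le_add_diff:
  assumes "f \<in> H" "g \<in> H"
  shows "hnorm ip f \<le> hnorm ip g + hnorm ip (\<lambda>y. f y - g y)"
  using hnorm_triangle[OF assms(2) diff_mem[OF assms]] by simp

lemma hnorm_shift_lipschitz:
  assumes h: "h \<in> H" and g: "g \<in> H"
  shows "hnorm ip (\<lambda>y. h y - z * g y) \<le> hnorm ip (\<lambda>y. h y - w * g y) + cmod (z - w) * hnorm ip g"
proof -
  have "(\<lambda>y. (h y - z * g y) - (h y - w * g y)) = (\<lambda>y. (w - z) * g y)"
    by (simp add: algebra_simps)
  moreover have "cmod (w - z) = cmod (z - w)" by (rule norm_minus_commute)
  ultimately show ?thesis
    using hnorm_le_add_diff[of "\<lambda>y. h y - z * g y" "\<lambda>y. h y - w * g y"]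
    by (simp add: h g diff_mem scale_mem hnorm_scale)
qed

lemma hnorm_shift_perturb:
  assumes "a \<in> H" "b \<in> H" "u \<in> H" "v \<in> H"
  shows "hnorm ip (\<lambda>y. u y - z * a y)
    \<le> hnorm ip (\<lambda>y. v y - z * b y) + hnorm ip (\<lambda>y. v y - u y) + cmod z * hnorm ip (\<lambda>y. b y - a y)"
proof -
  have vu: "(\<lambda>y. v y - u y) \<in> H" and ba: "(\<lambda>y. b y - a y) \<in> H"
    using assms by (simp_all add: diff_mem)
  have "(\<lambda>y. (u y - z * a y) - (v y - z * b y)) = (\<lambda>y. (-1) * (v y - u y) + z * (b y - a y))"
    by (simp add: algebra_simps)
  moreover have "hnorm ip (\<lambda>y. (-1) * (v y - u y) + z * (b y - a y))
      \<le> hnorm ip (\<lambda>y. (-1) * (v y - u y)) + hnorm ip (\<lambda>y. z * (b y - a y))"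
    by (rule hnorm_triangle[OF scale_mem[OF vu] scale_mem[OF ba]])
  moreover have "hnorm ip (\<lambda>y. (-1) * (v y - u y)) = hnorm ip (\<lambda>y. v y - u y)"
    using hnorm_scale[OF vu, of "-1"] by simp
  ultimately have "hnorm ip (\<lambda>y. (u y - z * a y) - (v y - z * b y))
      \<le> hnorm ip (\<lambda>y. v y - u y) + cmod z * hnorm ip (\<lambda>y. b y - a y)"
    by (simp add: hnorm_scale[OF ba])
  then show ?thesis
    using hnorm_le_add_diff[of "\<lambda>y. u y - z * a y" "\<lambda>y. v y - z * b y"] assms
    by (simp add: diff_mem scale_mem)
qed


lemma sigma_inf_nonneg:
  assumes "X \<subseteq> H" and "\<And>g. g \<in> X \<Longrightarrow> T g \<in> H"
  shows "0 \<le> sigma_inf ip T X"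
  using assms by (intro sigma_inf_greatest) (auto intro!: divide_nonneg_nonneg hnorm_nonneg)

lemma sigma_inf_shift_lipschitz:
  assumes "X \<subseteq> H" and "\<And>g. g \<in> X \<Longrightarrow> T g \<in> H"
  shows "sigma_inf ip (\<lambda>g y. T g y - z * g y) X
    \<le> sigma_inf ip (\<lambda>g y. T g y - w * g y) X + ereal (cmod (z - w))"
proof -
  have "sigma_inf ip (\<lambda>g y. T g y - z * g y) X - ereal (cmod (z - w))
      \<le> sigma_inf ip (\<lambda>g y. T g y - w * g y) X"
  proof (rule sigma_inf_greatest)
    fix g assume g: "g \<in> X" "g \<noteq> (\<lambda>_. 0)"
    with assms have gH: "g \<in> H" and TgH: "T g \<in> H" by auto
    have "hnorm ip (\<lambda>y. T g y - z * g y) / hnorm ip g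
        \<le> hnorm ip (\<lambda>y. T g y - w * g y) / hnorm ip g + cmod (z - w)"
      using hnorm_shift_lipschitz[OF TgH gH, of z w] hnorm_pos[OF gH g(2)]
      by (simp add: field_simps)
    then have "ereal (hnorm ip (\<lambda>y. T g y - z * g y) / hnorm ip g)
        \<le> ereal (hnorm ip (\<lambda>y. T g y - w * g y) / hnorm ip g) + ereal (cmod (z - w))"
      by simp
    with sigma_inf_le[OF g] have "sigma_inf ip (\<lambda>g y. T g y - z * g y) X
        \<le> ereal (hnorm ip (\<lambda>y. T g y - w * g y) / hnorm ip g) + ereal (cmod (z - w))"
      by (rule order_trans)
    then show "sigma_inf ip (\<lambda>g y. T g y - z * g y) X - ereal (cmod (z - w))
        \<le> ereal (hnorm ip (\<lambda>y. T g y - w * g y) / hnorm ip g)"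
      by (subst ereal_minus_le) auto
  qed
  then show ?thesis by (subst (asm) ereal_minus_le) auto
qed

lemma sigma_inf_core_eq:
  assumes core: "is_core H ip T D S"
  shows "sigma_inf ip (\<lambda>g y. T g y - z * g y) S = sigma_inf ip (\<lambda>g y. T g y - z * g y) D"
proof (rule antisym)
  show "sigma_inf ip (\<lambda>g y. T g y - z * g y) S \<le> sigma_inf ip (\<lambda>g y. T g y - z * g y) D"
  proof (rule sigma_inf_greatest)
    fix g assume g: "g \<in> D" "g \<noteq> (\<lambda>_. 0)"
    have gH: "g \<in> H" and TgH: "T g \<in> H" using is_core_graphD[OF core g(1)] by auto
    define G where "G = hnorm ip g"
    define A where "A = hnorm ip (\<lambda>y. T g y - z * g y)"
    have G: "0 < G" unfolding G_def using hnorm_pos[OF gH g(2)] .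
    have A: "0 \<le> A" unfolding A_def using hnorm_nonneg[OF diff_mem[OF TgH scale_mem[OF gH]]] .
    show "sigma_inf ip (\<lambda>g y. T g y - z * g y) S \<le> ereal (A / G)"
    proof (rule ereal_le_epsilon2)
      fix \<epsilon> :: real assume "0 < \<epsilon>"
      obtain \<delta> where \<delta>: "0 < \<delta>" "\<delta> < G" "(A + (1 + cmod z) * \<delta>) / (G - \<delta>) < A / G + \<epsilon>"
        using ratio_perturbation_small[OF G \<open>0 < \<epsilon>\<close>] .
      obtain s where s: "s \<in> S" "hnorm ip (\<lambda>y. g y - s y) < \<delta>" "hnorm ip (\<lambda>y. T g y - T s y) < \<delta>"
        using is_core_graphD(3)[OF core g(1) \<delta>(1)] by blast
      have "s \<in> D" using s(1) core unfolding is_core_def by blast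
      then have sH: "s \<in> H" and TsH: "T s \<in> H" using is_core_graphD[OF core] by auto
      have "G \<le> hnorm ip s + hnorm ip (\<lambda>y. g y - s y)"
        unfolding G_def using hnorm_le_add_diff[OF gH sH] .
      then have s_large: "G - \<delta> < hnorm ip s" using s(2) by linarith
      then have "s \<noteq> (\<lambda>_. 0)" using \<delta>(2) hnorm_zero by auto
      have "hnorm ip (\<lambda>y. T s y - z * s y) \<le> A + (1 + cmod z) * \<delta>"
        using hnorm_shift_perturb[OF sH gH TsH TgH, of z] s(2,3) hnorm_nonneg[OF diff_mem[OF gH sH]]
          mult_left_mono[OF less_imp_le[OF s(2)], of "cmod z"]
        unfolding A_def by (simp add: algebra_simps)
      then have "hnorm ip (\<lambda>y. T s y - z * s y) / hnorm ip s \<le> (A + (1 + cmod z) * \<delta>) / (G - \<delta>)"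
        using s_large \<delta>(1,2) A by (intro frac_le) (auto intro: hnorm_nonneg diff_mem scale_mem TsH sH)
      with \<delta>(3) sigma_inf_le[OF s(1) \<open>s \<noteq> (\<lambda>_. 0)\<close>, of ip "\<lambda>g y. T g y - z * g y"]
      show "sigma_inf ip (\<lambda>g y. T g y - z * g y) S \<le> ereal (A / G) + ereal \<epsilon>"
        by (simp add: order_trans)
    qed
  qed
  show "sigma_inf ip (\<lambda>g y. T g y - z * g y) D \<le> sigma_inf ip (\<lambda>g y. T g y - z * g y) S"
    using core unfolding is_core_def by (intro sigma_inf_antimono) blast
qed

lemma sigma_inf_shift_core_chain_uniform:
  assumes core: "is_core H ip T D S" and "incseq V" and V_Union: "(\<Union>N. V N) = S"
    and "compact C" and "0 < e"
  shows "\<forall>\<^sub>F N in sequentially. \<forall>z\<in>C.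
    sigma_inf ip (\<lambda>g y. T g y - z * g y) (V N) \<le> sigma_inf ip (\<lambda>g y. T g y - z * g y) D + ereal e"
proof (rule eventually_uniform_le_of_equi_lipschitz[OF \<open>compact C\<close> \<open>0 < e\<close>])
  have D: "D \<subseteq> H" "\<And>g. g \<in> D \<Longrightarrow> T g \<in> H"
    using is_core_graphD[OF core] by auto
  moreover have "V N \<subseteq> D" for N
    using V_Union core unfolding is_core_def by blast
  ultimately show "sigma_inf ip (\<lambda>g y. T g y - z * g y) (V N)
      \<le> sigma_inf ip (\<lambda>g y. T g y - w * g y) (V N) + ereal (dist z w)"
    and "sigma_inf ip (\<lambda>g y. T g y - z * g y) D
      \<le> sigma_inf ip (\<lambda>g y. T g y - w * g y) D + ereal (dist z w)" for N z w
    unfolding dist_norm by (intro sigma_inf_shift_lipschitz; auto)+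
  show "sigma_inf ip (\<lambda>g y. T g y - z * g y) D \<noteq> -\<infinity>" for z
  proof -
    have "0 \<le> sigma_inf ip (\<lambda>g y. T g y - z * g y) D"
      using D by (intro sigma_inf_nonneg) (auto intro!: diff_mem scale_mem)
    then show ?thesis by auto
  qed
  show "\<forall>\<^sub>F N in sequentially. sigma_inf ip (\<lambda>g y. T g y - z * g y) (V N) < b"
    if "sigma_inf ip (\<lambda>g y. T g y - z * g y) D < b" for z b
    using \<open>incseq V\<close> that unfolding sigma_inf_core_eq[OF core, symmetric] V_Union[symmetric]
    by (rule sigma_inf_UN_incseq_eventually_less)
qed

end

theorem mainTheorem2:
  fixes H :: "('x \<Rightarrow> complex) set"
    and ip :: "('x \<Rightarrow> complex) \<Rightarrow> ('x \<Rightarrow> complex) \<Rightarrow> complex"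
    and K :: "'x \<Rightarrow> 'x \<Rightarrow> complex"
    and F :: "'x \<Rightarrow> 'x"
    and xs :: "nat \<Rightarrow> 'x"
  assumes rkhs: "is_rkhs H ip K"
    and dense: "dense_in_H H ip (koopman_dom H F)"
    and core: "is_core H ip (pf H ip F) (pf_dom H ip F) (cspan {K (xs j) | j. j \<ge> 1})"
  shows "(\<forall>z N M. N \<le> M \<longrightarrow>
            sigma_inf ip (\<lambda>g y. pf H ip F g y - z * g y) (cspan {K (xs j) | j. 1 \<le> j \<and> j \<le> M})
          \<le> sigma_inf ip (\<lambda>g y. pf H ip F g y - z * g y) (cspan {K (xs j) | j. 1 \<le> j \<and> j \<le> N}))
       \<and> (\<forall>C. compact C \<longrightarrow> (\<forall>e::real. e > 0 \<longrightarrow>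
            (\<forall>\<^sub>F N in sequentially. \<forall>z\<in>C.
               sigma_inf ip (\<lambda>g y. pf H ip F g y - z * g y) (pf_dom H ip F) - ereal e
                 \<le> sigma_inf ip (\<lambda>g y. pf H ip F g y - z * g y) (cspan {K (xs j) | j. 1 \<le> j \<and> j \<le> N})
             \<and> sigma_inf ip (\<lambda>g y. pf H ip F g y - z * g y) (cspan {K (xs j) | j. 1 \<le> j \<and> j \<le> N})
                 \<le> sigma_inf ip (\<lambda>g y. pf H ip F g y - z * g y) (pf_dom H ip F) + ereal e)))"
proof -
  interpret rkhs H ip K by (rule rkhs.intro[OF rkhs])
  let ?T = "pf H ip F" and ?D = "pf_dom H ip F"
  let ?E = "\<lambda>N. {K (xs j) | j. 1 \<le> j \<and> j \<le> N}"
  let ?sig = "\<lambda>z X. sigma_inf ip (\<lambda>g y. ?T g y - z * g y) X"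
  have E_incseq: "incseq ?E" by (auto simp: incseq_def)
  then have V_incseq: "incseq (\<lambda>N. cspan (?E N))" by (simp add: incseq_def cspan_mono)
  have "{K (xs j) | j. j \<ge> 1} = (\<Union>N. ?E N)" by auto
  then have V_Union: "(\<Union>N. cspan (?E N)) = cspan {K (xs j) | j. j \<ge> 1}"
    using cspan_UN_incseq[OF E_incseq] by simp
  have V_D: "cspan (?E N) \<subseteq> ?D" for N
    using V_Union core unfolding is_core_def by blast
  have upper: "\<forall>\<^sub>F N in sequentially. \<forall>z\<in>C. ?sig z (cspan (?E N)) \<le> ?sig z ?D + ereal e"
    if "compact C" "0 < e" for C e
    using sigma_inf_shift_core_chain_uniform[OF core V_incseq V_Union that] .
  have lower: "?sig z ?D - ereal e \<le> ?sig z (cspan (?E N))" if "0 < e" for z e N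
  proof -
    have "?sig z ?D - ereal e \<le> ?sig z ?D" using that by (cases "?sig z ?D") auto
    also have "\<dots> \<le> ?sig z (cspan (?E N))" by (rule sigma_inf_antimono[OF V_D])
    finally show ?thesis .
  qed
  show ?thesis
  proof (intro conjI allI impI)
    show "?sig z (cspan (?E M)) \<le> ?sig z (cspan (?E N))" if "N \<le> M" for z N M
      using V_incseq that by (intro sigma_inf_antimono) (simp add: incseq_def)
    show "\<forall>\<^sub>F N in sequentially. \<forall>z\<in>C. ?sig z ?D - ereal e \<le> ?sig z (cspan (?E N))
        \<and> ?sig z (cspan (?E N)) \<le> ?sig z ?D + ereal e" if "compact C" "0 < e" for C e
      using upper[OF that] by (rule eventually_mono) (use lower[OF that(2)] in blast)
  qed
qed

end
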